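(* Let $E,F$ be PVMs on a finite-dimensional Hilbert space with $E\le F$, and let $\rho$ be a density operator commuting with $E$. Then $$D(\rho\|\mathcal E_F(\rho))\le\log w(E).$$
   Context: $D(\rho\|\sigma)=\mathrm{Tr}\rho(\log\rho-\log\sigma)$. For PVMs $E=\{E_i\}$, $F=\{F_j\}$, $E\le F$ means each $E_i$ is a sum of some $F_j$; $\rho$ commutes with $E$ if $\rho E_i=E_i\rho$ for all $i$; $w(E)=\sup_i\dim(\mathrm{range}\,E_i)$; $\mathcal E_F(\rho)=\sum_jF_j\rho F_j$. *)

theory Defs
  imports "HOL-Analysis.Analysis"
begin

definition adj :: "complex^'n^'m \<Rightarrow> complex^'m^'n" where
  "adj A = (\<chi> i j. cnj (A $ j $ i))"

definition unitary_mat :: "complex^'n^'n \<Rightarrow> bool" where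
  "unitary_mat U \<longleftrightarrow> adj U ** U = mat 1 \<and> U ** adj U = mat 1"

definition diag_mat :: "('n::finite \<Rightarrow> complex) \<Rightarrow> complex^'n^'n" where
  "diag_mat d = (\<chi> i j. if i = j then d i else 0)"

definition hermitian :: "complex^'n^'n \<Rightarrow> bool" where
  "hermitian A \<longleftrightarrow> adj A = A"

definition psd :: "complex^'n^'n \<Rightarrow> bool" where
  "psd A \<longleftrightarrow> hermitian A \<and> (\<forall>x. Re (\<Sum>i\<in>UNIV. cnj (x $ i) * (A *v x) $ i) \<ge> 0)"

definition density_op :: "complex^'n^'n \<Rightarrow> bool" where
  "density_op \<rho> \<longleftrightarrow> psd \<rho> \<and> trace \<rho> = 1"

definition projection :: "complex^'n^'n \<Rightarrow> bool" where
  "projection P \<longleftrightarrow> P ** P = P \<and> adj P = P"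

definition PVM :: "'i set \<Rightarrow> ('i \<Rightarrow> complex^'n^'n) \<Rightarrow> bool" where
  "PVM I E \<longleftrightarrow> finite I \<and> I \<noteq> {} \<and> (\<forall>i\<in>I. projection (E i)) \<and> (\<Sum>i\<in>I. E i) = mat 1"

definition pvm_le :: "'i set \<Rightarrow> ('i \<Rightarrow> complex^'n^'n) \<Rightarrow> 'j set \<Rightarrow> ('j \<Rightarrow> complex^'n^'n) \<Rightarrow> bool" where
  "pvm_le I E J F \<longleftrightarrow> (\<forall>i\<in>I. \<exists>S\<subseteq>J. E i = (\<Sum>j\<in>S. F j))"

definition commutes_with :: "complex^'n^'n \<Rightarrow> 'i set \<Rightarrow> ('i \<Rightarrow> complex^'n^'n) \<Rightarrow> bool" where
  "commutes_with \<rho> I E \<longleftrightarrow> (\<forall>i\<in>I. \<rho> ** E i = E i ** \<rho>)"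

definition range_dim :: "complex^'n^'n \<Rightarrow> nat" where
  "range_dim A = vec.dim (range (\<lambda>x. A *v x))"

definition width :: "'i set \<Rightarrow> ('i \<Rightarrow> complex^'n^'n) \<Rightarrow> nat" where
  "width I E = Sup (range_dim ` E ` I)"

definition pinch :: "'j set \<Rightarrow> ('j \<Rightarrow> complex^'n^'n) \<Rightarrow> complex^'n^'n \<Rightarrow> complex^'n^'n" where
  "pinch J F \<rho> = (\<Sum>j\<in>J. F j ** \<rho> ** F j)"

definition mat_fun :: "(real \<Rightarrow> real) \<Rightarrow> complex^'n^'n \<Rightarrow> complex^'n^'n" where
  "mat_fun f A = (SOME B. \<exists>U (ev::'n \<Rightarrow> real). unitary_mat U \<and>
       A = U ** diag_mat (\<lambda>i. complex_of_real (ev i)) ** adj U \<and>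
       B = U ** diag_mat (\<lambda>i. complex_of_real (f (ev i))) ** adj U)"

text \<open>Matrix logarithm on the support (log taken as 0 on the kernel, i.e. 0 log 0 = 0).\<close>
definition mat_log :: "complex^'n^'n \<Rightarrow> complex^'n^'n" where
  "mat_log A = mat_fun (\<lambda>x. if x > 0 then ln x else 0) A"

definition rel_entropy :: "complex^'n^'n \<Rightarrow> complex^'n^'n \<Rightarrow> ereal" where
  "rel_entropy \<rho> \<sigma> =
    (if range (\<lambda>x. \<rho> *v x) \<subseteq> range (\<lambda>x. \<sigma> *v x)
     then ereal (Re (trace (\<rho> ** (mat_log \<rho> - mat_log \<sigma>))))
     else \<infinity>)"

end

theory Submission
  imports Defs
begin

(* Diagonalise rho in an orthonormal eigenbasis a_k adapted to E (possible because rho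
   commutes with E), and the pinched state sigma = E_F(rho) in an eigenbasis b_m adapted to F,
   hence also to the coarser E.  The eigenvalues of sigma are s_m = sum_k r_k |<a_k, b_m>|^2, and
   <a_k, b_m> = 0 unless a_k and b_m lie in the same block ran E_i; so r and s give each block
   the same mass p_i, and D(rho || sigma) = sum_k r_k ln r_k - sum_m s_m ln s_m.  Coarse-graining
   gives sum_k r_k ln r_k <= sum_i p_i ln p_i, while block i carries at most dim ran E_i <= w(E)
   of the b_m, so sum_m s_m ln s_m >= sum_i p_i ln (p_i / w(E)). *)

definition cinner :: "complex^'n \<Rightarrow> complex^'n \<Rightarrow> complex" where
  "cinner x y = (\<Sum>i\<in>UNIV. cnj (x$i) * y$i)"

lemma cinner_add_right: "cinner x (y + z) = cinner x y + cinner x z"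
  by (simp add: cinner_def distrib_left sum.distrib)

lemma cinner_add_left: "cinner (x + y) z = cinner x z + cinner y z"
  by (simp add: cinner_def distrib_right sum.distrib)

lemma cinner_diff_right: "cinner x (y - z) = cinner x y - cinner x z"
  by (simp add: cinner_def right_diff_distrib sum_subtractf)

lemma cinner_scale_right: "cinner x (c *s y) = c * cinner x y"
  by (simp add: cinner_def sum_distrib_left algebra_simps)

lemma cinner_scale_left: "cinner (c *s x) y = cnj c * cinner x y"
  by (simp add: cinner_def sum_distrib_left algebra_simps)

lemma cinner_zero_right [simp]: "cinner x 0 = 0"
  by (simp add: cinner_def)

lemma cinner_zero_left [simp]: "cinner 0 x = 0"
  by (simp add: cinner_def)

lemma cinner_sum_right: "cinner x (\<Sum>k\<in>S. f k) = (\<Sum>k\<in>S. cinner x (f k))"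
  by (induction S rule: infinite_finite_induct) (simp_all add: cinner_add_right)

lemma cinner_commute: "cinner y x = cnj (cinner x y)"
  by (simp add: cinner_def mult.commute)

lemma cinner_adj: "cinner x (A *v y) = cinner (adj A *v x) y"
proof -
  have "cinner x (A *v y) = (\<Sum>i\<in>UNIV. \<Sum>j\<in>UNIV. cnj (x$i) * (A$i$j * y$j))"
    by (simp add: cinner_def matrix_vector_mult_def sum_distrib_left)
  also have "\<dots> = (\<Sum>j\<in>UNIV. \<Sum>i\<in>UNIV. cnj (x$i) * (A$i$j * y$j))"
    by (rule sum.swap)
  also have "\<dots> = cinner (adj A *v x) y"
    by (simp add: cinner_def matrix_vector_mult_def adj_def sum_distrib_right sum_distrib_left mult_ac)
  finally show ?thesis .
qed

lemma cinner_hermitian: "hermitian A \<Longrightarrow> cinner x (A *v y) = cinner (A *v x) y"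
  by (simp add: cinner_adj hermitian_def)

lemma cinner_self: "cinner x x = complex_of_real ((norm x)\<^sup>2)"
proof -
  have "cinner x x = (\<Sum>i\<in>UNIV. complex_of_real ((cmod (x$i))\<^sup>2))"
    unfolding cinner_def by (metis complex_norm_square mult.commute)
  also have "\<dots> = complex_of_real ((norm x)\<^sup>2)"
    by (simp add: norm_vec_def L2_set_def sum_nonneg of_real_sum)
  finally show ?thesis .
qed

lemma adj_mult: "adj (A ** B) = adj B ** adj A"
  by (simp add: adj_def matrix_matrix_mult_def vec_eq_iff mult.commute)

lemma adj_sum: "adj (\<Sum>k\<in>S. f k) = (\<Sum>k\<in>S. adj (f k))"
  by (induction S rule: infinite_finite_induct) (simp_all add: adj_def vec_eq_iff)

lemma scaleR_eq_vector_smult: "(r::real) *\<^sub>R (x::complex^'n) = complex_of_real r *s x"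
  unfolding vec_eq_iff vector_scaleR_component vector_smult_component
  by (simp add: scaleR_conv_of_real)

lemma closed_vec_subspace: "vec.subspace (W :: (complex^'n) set) \<Longrightarrow> closed W"
  by (intro closed_subspace) (simp add: subspace_def vec.subspace_def scaleR_eq_vector_smult)

lemma quadratic_form_scale:
  "Re (cinner (complex_of_real c *s x) (A *v (complex_of_real c *s x))) = c\<^sup>2 * Re (cinner x (A *v x))"
  by (simp add: cinner_scale_left cinner_scale_right vec.scale power2_eq_square)

lemma linear_dominated_by_quadratic_eq_0:
  fixes a c :: real assumes "\<And>t. a * t + c * t\<^sup>2 \<le> 0" shows "a = 0"
proof (rule ccontr)
  assume a: "a \<noteq> 0"
  define r where "r = 1 / (\<bar>c\<bar> + 1)"
  have r: "r > 0" unfolding r_def by simp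
  have "1 + c * r = (\<bar>c\<bar> + 1 + c) / (\<bar>c\<bar> + 1)" unfolding r_def by (simp add: field_simps)
  also have "\<dots> > 0" by (intro divide_pos_pos) linarith+
  finally have cr: "1 + c * r > 0" .
  have "a * (a * r) + c * (a * r)\<^sup>2 = a\<^sup>2 * r * (1 + c * r)"
    by (simp add: algebra_simps power2_eq_square)
  also have "\<dots> > 0" using a r cr by simp
  finally show False using assms[of "a * r"] by simp
qed

lemma exists_quadratic_form_maximizer:
  assumes W: "vec.subspace W" and x: "x \<in> W" "x \<noteq> 0"
  shows "\<exists>u\<in>W. norm u = 1 \<and>
           (\<forall>z\<in>W. Re (cinner z (A *v z)) \<le> Re (cinner u (A *v u)) * (norm z)\<^sup>2)"
proof -
  define q where "q z = Re (cinner z (A *v z))" for z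
  have normalize: "complex_of_real (1 / norm z) *s z \<in> W \<inter> sphere 0 1" if "z \<in> W" "z \<noteq> 0" for z
  proof -
    have "norm (complex_of_real (1 / norm z) *s z) = 1"
      using that by (simp only: scaleR_eq_vector_smult[symmetric]) simp
    then show ?thesis using that W by (simp add: vec.subspace_scale)
  qed
  have "compact (W \<inter> sphere 0 1)"
    by (intro closed_Int_compact closed_vec_subspace W compact_sphere)
  moreover have "W \<inter> sphere 0 1 \<noteq> {}" using normalize[OF x] by blast
  moreover have "continuous_on (W \<inter> sphere 0 1) q"
    unfolding q_def cinner_def matrix_vector_mult_def
    by (intro continuous_intros continuous_on_component continuous_on_id)
  ultimately obtain u where u: "u \<in> W \<inter> sphere 0 1" and max: "\<And>y. y \<in> W \<inter> sphere 0 1 \<Longrightarrow> q y \<le> q u"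
    using continuous_attains_sup by metis
  have "q z \<le> q u * (norm z)\<^sup>2" if z: "z \<in> W" for z
  proof (cases "z = 0")
    case True then show ?thesis by (simp add: q_def cinner_def)
  next
    case False
    have "z = complex_of_real (norm z) *s (complex_of_real (1 / norm z) *s z)"
      using False by (simp add: vec_eq_iff)
    then have "q z = (norm z)\<^sup>2 * q (complex_of_real (1 / norm z) *s z)"
      unfolding q_def by (metis quadratic_form_scale)
    also have "\<dots> \<le> (norm z)\<^sup>2 * q u"
      using max[OF normalize[OF z False]] by (simp add: mult_left_mono)
    finally show ?thesis by (simp add: mult.commute)
  qed
  then show ?thesis using u unfolding q_def by auto
qed

text \<open>At a maximiser of the Rayleigh quotient the first variation along every direction of the
  invariant subspace vanishes.\<close>
lemma quadratic_form_maximizer_eigenvector: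
  assumes A: "hermitian A" and W: "vec.subspace W" and u: "u \<in> W" "A *v u \<in> W" "norm u = 1"
    and max: "\<And>z. z \<in> W \<Longrightarrow> Re (cinner z (A *v z)) \<le> l * (norm z)\<^sup>2"
    and l: "l = Re (cinner u (A *v u))"
  shows "A *v u = complex_of_real l *s u"
proof -
  define v where "v = A *v u - complex_of_real l *s u"
  have v: "v \<in> W" unfolding v_def using W u by (simp add: vec.subspace_diff vec.subspace_scale)
  have "Re (cinner v (A *v u)) - l * Re (cinner v u) = 0"
  proof (rule linear_dominated_by_quadratic_eq_0)
    fix t :: real
    let ?z = "u + complex_of_real t *s v"
    have sym: "Re (cinner u (A *v v)) = Re (cinner v (A *v u))"
      using cinner_hermitian[OF A, of u v] cinner_commute[of "A *v u" v] by simp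
    have "Re (cinner ?z ?z) = 1 + 2 * t * Re (cinner v u) + t\<^sup>2 * (norm v)\<^sup>2"
      using u(3) cinner_commute[of u v] cinner_self[of u] cinner_self[of v]
      by (simp add: cinner_add_left cinner_add_right cinner_scale_left cinner_scale_right
          power2_eq_square algebra_simps)
    then have "(norm ?z)\<^sup>2 = 1 + 2 * t * Re (cinner v u) + t\<^sup>2 * (norm v)\<^sup>2"
      by (simp add: cinner_self)
    moreover have "Re (cinner ?z (A *v ?z)) = l + 2 * t * Re (cinner v (A *v u)) + t\<^sup>2 * Re (cinner v (A *v v))"
      using sym l by (simp add: vec.add vec.scale cinner_add_left cinner_add_right cinner_scale_left
          cinner_scale_right power2_eq_square algebra_simps)
    moreover have "?z \<in> W" using W u v by (simp add: vec.subspace_add vec.subspace_scale)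
    ultimately have "2 * t * Re (cinner v (A *v u)) + t\<^sup>2 * Re (cinner v (A *v v))
        \<le> l * (2 * t * Re (cinner v u) + t\<^sup>2 * (norm v)\<^sup>2)"
      using max[of ?z] by (simp add: algebra_simps)
    then show "(Re (cinner v (A *v u)) - l * Re (cinner v u)) * t
        + ((Re (cinner v (A *v v)) - l * (norm v)\<^sup>2) / 2) * t\<^sup>2 \<le> 0"
      by (simp add: field_simps)
  qed
  then have "Re (cinner v v) = 0"
    unfolding v_def by (simp add: cinner_diff_right cinner_scale_right)
  then show ?thesis by (simp add: cinner_self v_def)
qed

lemma hermitian_invariant_subspace_eigenvector:
  assumes A: "hermitian A" and W: "vec.subspace W" and inv: "\<And>x. x \<in> W \<Longrightarrow> A *v x \<in> W"
    and x: "x \<in> W" "x \<noteq> 0"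
  shows "\<exists>u\<in>W. norm u = 1 \<and> (\<exists>l::real. A *v u = complex_of_real l *s u)"
  using exists_quadratic_form_maximizer[OF W x, of A] quadratic_form_maximizer_eigenvector[OF A W] inv
  by metis

lemma matrix_sum_vector_mult: "(\<Sum>k\<in>K. P k) *v x = (\<Sum>k\<in>K. P k *v x)"
  by (induction K rule: infinite_finite_induct) (simp_all add: matrix_vector_mult_add_rdistrib)

lemma projection_idem_apply: "projection P \<Longrightarrow> P *v (P *v x) = P *v x"
  by (simp add: projection_def matrix_vector_mul_assoc)

lemma cinner_projection: "projection P \<Longrightarrow> cinner x (P *v y) = cinner (P *v x) y"
  by (metis cinner_adj projection_def)

lemma PVM_projection: "PVM K P \<Longrightarrow> k \<in> K \<Longrightarrow> projection (P k)"
  unfolding PVM_def by auto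

lemma PVM_sum_apply: "PVM K P \<Longrightarrow> (\<Sum>k\<in>K. P k *v x) = x"
  unfolding PVM_def by (metis matrix_sum_vector_mult matrix_vector_mul_lid)

text \<open>Orthogonality of the projections of a PVM follows from Pythagoras:
  \<open>\<parallel>x\<parallel>\<^sup>2 = \<Sum>\<^sub>k \<parallel>P\<^sub>k x\<parallel>\<^sup>2\<close>, applied to a vector \<open>x\<close> in the range of \<open>P\<^sub>l\<close>.\<close>
lemma PVM_orthogonal_apply:
  assumes PV: "PVM K P" and k: "k \<in> K" and l: "l \<in> K" and kl: "k \<noteq> l"
  shows "P k *v (P l *v y) = 0"
proof -
  define x where "x = P l *v y"
  have fin: "finite K" using PV unfolding PVM_def by simp
  have pr: "projection (P k)" if "k \<in> K" for k using PVM_projection[OF PV that] .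
  have xl: "P l *v x = x" unfolding x_def using pr[OF l] by (simp add: projection_idem_apply)
  have "cinner x x = (\<Sum>k\<in>K. cinner x (P k *v x))"
    using PVM_sum_apply[OF PV, of x] by (metis cinner_sum_right)
  also have "\<dots> = (\<Sum>k\<in>K. cinner (P k *v x) (P k *v x))"
    by (intro sum.cong refl) (metis cinner_projection pr projection_idem_apply)
  finally have "Re (cinner x x) = (\<Sum>k\<in>K. Re (cinner (P k *v x) (P k *v x)))"
    by (simp add: Re_sum)
  then have "(norm x)\<^sup>2 = (\<Sum>k\<in>K. (norm (P k *v x))\<^sup>2)"
    by (simp add: cinner_self)
  also have "\<dots> = (norm x)\<^sup>2 + (\<Sum>k\<in>K-{l}. (norm (P k *v x))\<^sup>2)"
    using fin l xl by (simp add: sum.remove)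
  finally have "(\<Sum>k\<in>K-{l}. (norm (P k *v x))\<^sup>2) = 0" by simp
  then have "(norm (P k *v x))\<^sup>2 = 0"
    using fin k kl by (subst (asm) sum_nonneg_eq_0_iff) auto
  then show ?thesis unfolding x_def by simp
qed

lemma PVM_orthogonal_range:
  assumes "PVM K P" "k \<in> K" "l \<in> K" "k \<noteq> l" "P l *v x = x"
  shows "P k *v x = 0"
  using PVM_orthogonal_apply[OF assms(1-4), of x] assms(5) by simp

definition orthonormal :: "(complex^'n) set \<Rightarrow> bool" where
  "orthonormal S \<longleftrightarrow> (\<forall>u\<in>S. \<forall>v\<in>S. cinner u v = (if u = v then 1 else 0))"

lemma orthonormal_independent: assumes S: "orthonormal S" shows "vec.independent S"
proof
  assume "vec.dependent S"
  then obtain t u v where t: "finite t" "t \<subseteq> S" "(\<Sum>v\<in>t. u v *s v) = 0" and v: "v \<in> t" "u v \<noteq> 0"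
    unfolding vec.dependent_explicit by blast
  have "0 = cinner v (\<Sum>w\<in>t. u w *s w)" using t by simp
  also have "\<dots> = (\<Sum>w\<in>t. u w * (if v = w then 1 else 0))"
  proof -
    have "\<forall>w\<in>t. cinner v w = (if v = w then 1 else 0)"
      using S t(2) v(1) unfolding orthonormal_def by blast
    then show ?thesis unfolding cinner_sum_right cinner_scale_right by simp
  qed
  also have "\<dots> = u v" using t v by (simp add: if_distrib[of "(*) _"] cong: if_cong)
  finally show False using v by simp
qed

lemma orthonormal_finite: "orthonormal S \<Longrightarrow> finite S"
  using orthonormal_independent vec.finiteI_independent by blast

lemma orthonormal_insert:
  assumes "orthonormal S" "cinner u u = 1" "\<And>s. s \<in> S \<Longrightarrow> cinner s u = 0"
  shows "orthonormal (insert u S)"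
proof -
  have us: "cinner u s = 0" if "s \<in> S" for s
    using assms(3)[OF that] cinner_commute[of u s] by simp
  have "u \<notin> S" using assms(2,3) by force
  then show ?thesis using assms us unfolding orthonormal_def by auto
qed

lemma orthonormal_not_spanning_orthogonal:
  assumes S: "orthonormal S" and x: "x \<notin> vec.span S"
  shows "\<exists>y. y \<noteq> 0 \<and> (\<forall>s\<in>S. cinner s y = 0)"
proof (intro exI conjI ballI)
  define y where "y = x - (\<Sum>s\<in>S. cinner s x *s s)"
  have "(\<Sum>s\<in>S. cinner s x *s s) \<in> vec.span S"
    by (intro vec.span_sum vec.span_scale vec.span_base)
  then show "y \<noteq> 0" unfolding y_def using x by auto
  fix s assume s: "s \<in> S"
  have "cinner s (\<Sum>s'\<in>S. cinner s' x *s s') = (\<Sum>s'\<in>S. if s = s' then cinner s' x else 0)"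
    unfolding cinner_sum_right cinner_scale_right using S s unfolding orthonormal_def
    by (intro sum.cong) auto
  also have "\<dots> = cinner s x" using orthonormal_finite[OF S] s by simp
  finally show "cinner s y = 0" unfolding y_def cinner_diff_right by simp
qed

definition adapted_eigenvectors ::
    "complex^'n^'n \<Rightarrow> 'k set \<Rightarrow> ('k \<Rightarrow> complex^'n^'n) \<Rightarrow> (complex^'n) set \<Rightarrow> bool" where
  "adapted_eigenvectors A K P S \<longleftrightarrow> orthonormal S \<and>
     (\<forall>u\<in>S. (\<exists>l::real. A *v u = complex_of_real l *s u) \<and> (\<exists>k\<in>K. P k *v u = u))"

lemma invariant_range_orthogonal_eigenvectors:
  assumes A: "hermitian A" and comm: "A ** P = P ** A"
    and ev: "\<And>u. u \<in> S \<Longrightarrow> \<exists>l::real. A *v u = complex_of_real l *s u"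
    and z: "P *v z = z" "\<forall>s\<in>S. cinner s z = 0"
  shows "P *v (A *v z) = A *v z \<and> (\<forall>s\<in>S. cinner s (A *v z) = 0)"
proof
  show "P *v (A *v z) = A *v z" using z(1) comm by (metis matrix_vector_mul_assoc)
  show "\<forall>s\<in>S. cinner s (A *v z) = 0"
  proof
    fix s assume s: "s \<in> S"
    then obtain l where "A *v s = complex_of_real l *s s" using ev by blast
    then show "cinner s (A *v z) = 0"
      using s z(2) cinner_hermitian[OF A, of s z] by (simp add: cinner_scale_left)
  qed
qed

text \<open>The new eigenvector is sought in the range of a single \<open>P\<^sub>k\<close> intersected with the
  orthogonal complement of \<open>S\<close>, an \<open>A\<close>-invariant subspace.\<close>
lemma adapted_eigenvectors_extend:
  assumes A: "hermitian A" and PV: "PVM K P" and comm: "\<And>k. k \<in> K \<Longrightarrow> A ** P k = P k ** A"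
    and S: "adapted_eigenvectors A K P S" and x: "x \<notin> vec.span S"
  shows "\<exists>u. u \<notin> S \<and> adapted_eigenvectors A K P (insert u S)"
proof -
  have o: "orthonormal S" and ev: "\<And>u. u \<in> S \<Longrightarrow> \<exists>l::real. A *v u = complex_of_real l *s u"
    and blk: "\<And>u. u \<in> S \<Longrightarrow> \<exists>k\<in>K. P k *v u = u"
    using S unfolding adapted_eigenvectors_def by auto
  obtain y where y: "y \<noteq> 0" and yS: "\<And>s. s \<in> S \<Longrightarrow> cinner s y = 0"
    using orthonormal_not_spanning_orthogonal[OF o x] by blast
  obtain k where k: "k \<in> K" "P k *v y \<noteq> 0"
    using PVM_sum_apply[OF PV, of y] y by (metis (mono_tags, lifting) sum.neutral)
  have prk: "projection (P k)" using PVM_projection[OF PV k(1)] .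
  define W where "W = {z. P k *v z = z \<and> (\<forall>s\<in>S. cinner s z = 0)}"
  have W: "vec.subspace W" unfolding vec.subspace_def W_def
    by (auto simp: vec.add vec.scale cinner_add_right cinner_scale_right)
  have invW: "A *v z \<in> W" if "z \<in> W" for z
    using invariant_range_orthogonal_eigenvectors[OF A comm[OF k(1)] ev] that unfolding W_def by blast
  have yW: "P k *v y \<in> W"
  proof -
    have "cinner s (P k *v y) = 0" if s: "s \<in> S" for s
    proof -
      obtain m where m: "m \<in> K" "P m *v s = s" using blk[OF s] by blast
      then have "P k *v s = (if m = k then s else 0)"
        using PVM_orthogonal_range[OF PV k(1)] by auto
      then show ?thesis using yS[OF s] cinner_projection[OF prk, of s y] by auto
    qed
    then show ?thesis unfolding W_def using projection_idem_apply[OF prk] by blast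
  qed
  obtain u l where uW: "u \<in> W" and un: "norm u = 1" and ul: "A *v u = complex_of_real l *s u"
    using hermitian_invariant_subspace_eigenvector[OF A W invW yW k(2)] by blast
  have uu: "cinner u u = 1" using un by (simp add: cinner_self)
  have "u \<notin> S" using uW uu unfolding W_def by auto
  moreover have "orthonormal (insert u S)"
    using orthonormal_insert[OF o uu] uW unfolding W_def by blast
  moreover have "\<forall>v\<in>insert u S. (\<exists>l::real. A *v v = complex_of_real l *s v) \<and> (\<exists>k\<in>K. P k *v v = v)"
    using ul ev blk uW k(1) unfolding W_def by auto
  ultimately show ?thesis unfolding adapted_eigenvectors_def by blast
qed

lemma adapted_eigenvectors_exist:
  fixes A :: "complex^'n^'n"
  assumes A: "hermitian A" and PV: "PVM K P" and comm: "\<And>k. k \<in> K \<Longrightarrow> A ** P k = P k ** A"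
  shows "m \<le> CARD('n) \<Longrightarrow> \<exists>S::(complex^'n) set. adapted_eigenvectors A K P S \<and> card S = m"
proof (induction m)
  case 0
  have "adapted_eigenvectors A K P {}" unfolding adapted_eigenvectors_def orthonormal_def by simp
  then show ?case by force
next
  case (Suc m)
  then obtain S :: "(complex^'n) set" where S: "adapted_eigenvectors A K P S" "card S = m" by auto
  have o: "orthonormal S" using S unfolding adapted_eigenvectors_def by simp
  have "vec.span S \<noteq> UNIV"
  proof
    assume "vec.span S = UNIV"
    then have "vec.dim (UNIV::(complex^'n) set) = card S"
      using vec.dim_eq_card[of S UNIV] orthonormal_independent[OF o] vec.span_UNIV by metis
    then show False using S(2) Suc.prems vec_dim_card by (metis Suc_n_not_le_n)
  qed
  then obtain x where "x \<notin> vec.span S" by auto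
  then obtain u where "u \<notin> S" "adapted_eigenvectors A K P (insert u S)"
    using adapted_eigenvectors_extend[OF A PV comm S(1)] by blast
  moreover have "card (insert u S) = Suc m" using \<open>u \<notin> S\<close> S(2) orthonormal_finite[OF o] by simp
  ultimately show ?case by blast
qed

definition orthonormal_basis :: "('n \<Rightarrow> complex^'n) \<Rightarrow> bool" where
  "orthonormal_basis f \<longleftrightarrow> (\<forall>c d. cinner (f c) (f d) = (if c = d then 1 else 0))"

definition eigenbasis :: "complex^'n^'n \<Rightarrow> ('n \<Rightarrow> complex^'n) \<Rightarrow> ('n \<Rightarrow> real) \<Rightarrow> bool" where
  "eigenbasis A f ev \<longleftrightarrow> orthonormal_basis f \<and> (\<forall>c. A *v f c = complex_of_real (ev c) *s f c)"

definition adapted :: "'k set \<Rightarrow> ('k \<Rightarrow> complex^'n^'n) \<Rightarrow> ('n \<Rightarrow> complex^'n) \<Rightarrow> bool" where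
  "adapted K P f \<longleftrightarrow> (\<forall>c. \<exists>k\<in>K. P k *v f c = f c)"

theorem hermitian_commuting_eigenbasis:
  fixes A :: "complex^'n^'n"
  assumes A: "hermitian A" and PV: "PVM K P" and comm: "\<And>k. k \<in> K \<Longrightarrow> A ** P k = P k ** A"
  obtains f ev where "eigenbasis A f ev" "adapted K P f"
proof -
  obtain S :: "(complex^'n) set" where S: "adapted_eigenvectors A K P S" "card S = CARD('n)"
    using adapted_eigenvectors_exist[OF A PV comm, of "CARD('n)"] by blast
  have o: "orthonormal S" using S unfolding adapted_eigenvectors_def by simp
  obtain f where f: "bij_betw f (UNIV::'n set) S"
    using finite_same_card_bij[of "UNIV::'n set" S] orthonormal_finite[OF o] S(2) by auto
  have fS: "f c \<in> S" for c using f bij_betwE by blast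
  have inj: "f c = f d \<longleftrightarrow> c = d" for c d
    using bij_betw_imp_inj_on[OF f] by (auto simp: inj_def)
  have "orthonormal_basis f"
    unfolding orthonormal_basis_def
  proof (intro allI)
    fix c d show "cinner (f c) (f d) = (if c = d then 1 else 0)"
      using o fS[of c] fS[of d] inj[of c d] unfolding orthonormal_def by auto
  qed
  moreover have "\<forall>c. \<exists>l::real. A *v f c = complex_of_real l *s f c"
    using S(1) fS unfolding adapted_eigenvectors_def by blast
  then obtain ev where "\<forall>c. A *v f c = complex_of_real (ev c) *s f c"
    by metis
  moreover have "adapted K P f" using S(1) fS unfolding adapted_eigenvectors_def adapted_def by blast
  ultimately show ?thesis using that unfolding eigenbasis_def by blast
qed

definition basis_matrix :: "('n \<Rightarrow> complex^'n) \<Rightarrow> complex^'n^'n" where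
  "basis_matrix f = (\<chi> i c. f c $ i)"

lemma basis_matrix_vector_mult: "basis_matrix f *v y = (\<Sum>c\<in>UNIV. y$c *s f c)"
  by (simp add: basis_matrix_def matrix_vector_mult_def vec_eq_iff sum_component mult.commute)

lemma adj_basis_matrix_vector_mult: "adj (basis_matrix f) *v x = (\<chi> c. cinner (f c) x)"
  by (simp add: basis_matrix_def adj_def matrix_vector_mult_def cinner_def)

lemma orthonormal_basis_unitary:
  assumes "orthonormal_basis f" shows "unitary_mat (basis_matrix f)"
proof -
  have "adj (basis_matrix f) ** basis_matrix f = mat 1"
    using assms unfolding orthonormal_basis_def
    by (simp add: basis_matrix_def adj_def matrix_matrix_mult_def mat_def vec_eq_iff cinner_def)
  then show ?thesis unfolding unitary_mat_def using matrix_left_right_inverse by blast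
qed

lemma orthonormal_basis_expand:
  assumes "orthonormal_basis f" shows "x = (\<Sum>c\<in>UNIV. cinner (f c) x *s f c)"
proof -
  have "basis_matrix f ** adj (basis_matrix f) = mat 1"
    using orthonormal_basis_unitary[OF assms] unfolding unitary_mat_def by simp
  then have "x = basis_matrix f *v (adj (basis_matrix f) *v x)"
    by (simp add: matrix_vector_mul_assoc)
  then show ?thesis by (simp add: basis_matrix_vector_mult adj_basis_matrix_vector_mult)
qed

lemma orthonormal_basis_parseval:
  assumes b: "orthonormal_basis b" shows "(\<Sum>m\<in>UNIV. (cmod (cinner x (b m)))\<^sup>2) = (norm x)\<^sup>2"
proof -
  have "complex_of_real (\<Sum>m\<in>UNIV. (cmod (cinner x (b m)))\<^sup>2)
      = (\<Sum>m\<in>UNIV. cinner (b m) x * cinner x (b m))"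
    unfolding of_real_sum
    by (intro sum.cong refl) (simp only: cinner_commute[of "b _" x] complex_norm_square mult.commute)
  also have "\<dots> = cinner x (\<Sum>m\<in>UNIV. cinner (b m) x *s b m)"
    by (simp add: cinner_sum_right cinner_scale_right)
  also have "\<dots> = cinner x x"
    by (simp only: orthonormal_basis_expand[OF b, of x, symmetric])
  finally show ?thesis by (simp only: cinner_self of_real_eq_iff)
qed

lemma orthonormal_basis_norm:
  assumes "orthonormal_basis b" shows "norm (b m) = 1"
proof -
  have "complex_of_real ((norm (b m))\<^sup>2) = 1"
    using assms unfolding orthonormal_basis_def cinner_self[symmetric] by simp
  then have "(norm (b m))\<^sup>2 = 1" by (simp only: of_real_eq_1_iff)
  then show ?thesis using norm_ge_zero[of "b m"] by (auto simp: power2_eq_1_iff)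
qed

lemma diag_mat_vector_mult: "diag_mat d *v y = (\<chi> c. d c * y$c)"
  by (simp add: diag_mat_def matrix_vector_mult_def vec_eq_iff if_distrib[of "\<lambda>z. z * _"] cong: if_cong)

lemma eigenbasis_decomposition:
  assumes "eigenbasis A f ev"
  shows "A = basis_matrix f ** diag_mat (\<lambda>i. complex_of_real (ev i)) ** adj (basis_matrix f)"
proof (subst matrix_eq, intro allI)
  fix x
  have f: "orthonormal_basis f" and ev: "\<And>c. A *v f c = complex_of_real (ev c) *s f c"
    using assms unfolding eigenbasis_def by auto
  have "A *v x = A *v (\<Sum>c\<in>UNIV. cinner (f c) x *s f c)" using orthonormal_basis_expand[OF f] by metis
  also have "\<dots> = (\<Sum>c\<in>UNIV. (complex_of_real (ev c) * cinner (f c) x) *s f c)"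
    by (simp add: vec.sum vec.scale ev mult.commute)
  also have "\<dots> = (basis_matrix f ** diag_mat (\<lambda>i. complex_of_real (ev i)) ** adj (basis_matrix f)) *v x"
    by (simp add: matrix_vector_mul_assoc[symmetric] basis_matrix_vector_mult
        adj_basis_matrix_vector_mult diag_mat_vector_mult)
  finally show "A *v x = \<dots>" .
qed

lemma eigenbasis_eigenvalue: "eigenbasis \<rho> a r \<Longrightarrow> cinner (a k) (\<rho> *v a k) = complex_of_real (r k)"
  unfolding eigenbasis_def orthonormal_basis_def by (simp add: cinner_scale_right)

lemma psd_eigenvalue_nonneg: "psd \<rho> \<Longrightarrow> eigenbasis \<rho> a r \<Longrightarrow> 0 \<le> r k"
  using eigenbasis_eigenvalue[of \<rho> a r k] unfolding psd_def cinner_def by (metis Re_complex_of_real)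

text \<open>\<^const>\<open>mat_fun\<close> picks some spectral decomposition by \<open>SOME\<close>; on eigenvectors its value
  does not depend on that choice.\<close>
lemma mat_fun_eigenvector:
  fixes A :: "complex^'n^'n"
  assumes ex: "\<exists>U ev. unitary_mat U \<and> A = U ** diag_mat (\<lambda>i. complex_of_real (ev i)) ** adj U"
    and v: "A *v v = complex_of_real \<mu> *s v"
  shows "mat_fun g A *v v = complex_of_real (g \<mu>) *s v"
proof -
  let ?decomp = "\<lambda>B. \<exists>U (ev::'n \<Rightarrow> real). unitary_mat U \<and>
       A = U ** diag_mat (\<lambda>i. complex_of_real (ev i)) ** adj U \<and>
       B = U ** diag_mat (\<lambda>i. complex_of_real (g (ev i))) ** adj U"
  have "\<exists>B. ?decomp B" using ex by blast
  then have "?decomp (mat_fun g A)" unfolding mat_fun_def by (rule someI_ex)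
  then obtain U ev where U: "unitary_mat U"
    and AU: "A = U ** diag_mat (\<lambda>i. complex_of_real (ev i)) ** adj U"
    and gU: "mat_fun g A = U ** diag_mat (\<lambda>i. complex_of_real (g (ev i))) ** adj U"
    by blast
  define c where "c = adj U *v v"
  have UU: "adj U ** U = mat 1" "U ** adj U = mat 1" using U unfolding unitary_mat_def by auto
  have "diag_mat (\<lambda>i. complex_of_real (ev i)) *v c = adj U *v (A *v v)"
    unfolding AU c_def by (simp add: matrix_vector_mul_assoc matrix_mul_assoc UU)
  also have "\<dots> = complex_of_real \<mu> *s c" unfolding v c_def by (simp add: vec.scale)
  finally have eig: "ev i = \<mu> \<or> c$i = 0" for i
    by (auto simp: diag_mat_vector_mult vec_eq_iff)
  have "complex_of_real (g (ev i)) * c$i = complex_of_real (g \<mu>) * c$i" for i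
    using eig[of i] by auto
  then have "diag_mat (\<lambda>i. complex_of_real (g (ev i))) *v c = complex_of_real (g \<mu>) *s c"
    by (simp add: diag_mat_vector_mult vec_eq_iff)
  then have "mat_fun g A *v v = U *v (complex_of_real (g \<mu>) *s c)"
    unfolding gU c_def by (simp add: matrix_vector_mul_assoc[symmetric])
  also have "\<dots> = complex_of_real (g \<mu>) *s v"
    unfolding c_def by (simp add: vec.scale matrix_vector_mul_assoc UU)
  finally show ?thesis .
qed

lemma mat_fun_eigenbasis:
  assumes "eigenbasis A f ev"
  shows "mat_fun g A *v f c = complex_of_real (g (ev c)) *s f c"
  using assms orthonormal_basis_unitary eigenbasis_decomposition[OF assms]
  by (intro mat_fun_eigenvector) (auto simp: eigenbasis_def)

lemma matrix_diff_ldistrib: "(A::'a::comm_ring_1^'n^'m) ** (B - C) = A ** B - A ** C"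
  by (simp add: vec_eq_iff matrix_matrix_mult_def sum_subtractf algebra_simps)

lemma trace_orthonormal_basis:
  assumes f: "orthonormal_basis f" shows "trace M = (\<Sum>c\<in>UNIV. cinner (f c) (M *v f c))"
proof -
  have UU: "basis_matrix f ** adj (basis_matrix f) = mat 1"
    using orthonormal_basis_unitary[OF f] unfolding unitary_mat_def by simp
  have "trace M = trace ((M ** basis_matrix f) ** adj (basis_matrix f))"
    by (simp add: matrix_mul_assoc[symmetric] UU)
  also have "\<dots> = trace (adj (basis_matrix f) ** (M ** basis_matrix f))" by (rule trace_mul_sym)
  also have "\<dots> = (\<Sum>c\<in>UNIV. cinner (f c) (M *v f c))"
    by (simp add: trace_def matrix_matrix_mult_def adj_def basis_matrix_def cinner_def matrix_vector_mult_def)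
  finally show ?thesis .
qed

lemma trace_eigenbasis:
  assumes "eigenbasis \<rho> a r" shows "trace \<rho> = complex_of_real (\<Sum>k\<in>UNIV. r k)"
  using trace_orthonormal_basis[of a \<rho>] eigenbasis_eigenvalue[OF assms] assms
  by (simp add: eigenbasis_def of_real_sum)

lemma trace_mult_mat_fun:
  assumes "eigenbasis \<sigma> b s"
  shows "trace (\<rho> ** mat_fun g \<sigma>) = (\<Sum>m\<in>UNIV. complex_of_real (g (s m)) * cinner (b m) (\<rho> *v b m))"
  using assms unfolding trace_orthonormal_basis[OF assms[unfolded eigenbasis_def, THEN conjunct1]]
  by (simp add: matrix_vector_mul_assoc[symmetric] mat_fun_eigenbasis vec.scale cinner_scale_right)

lemma rel_entropy_eigenbases:
  assumes a: "eigenbasis \<rho> a r" and b: "eigenbasis \<sigma> b s"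
    and r: "\<And>k. r k \<ge> 0" and s: "\<And>m. s m \<ge> 0"
    and diag: "\<And>m. cinner (b m) (\<rho> *v b m) = complex_of_real (s m)"
    and supp: "range (\<lambda>x. \<rho> *v x) \<subseteq> range (\<lambda>x. \<sigma> *v x)"
  shows "rel_entropy \<rho> \<sigma> = ereal ((\<Sum>k\<in>UNIV. r k * ln (r k)) - (\<Sum>m\<in>UNIV. s m * ln (s m)))"
proof -
  define g where "g x = (if x > 0 then ln x else 0)" for x :: real
  \<comment> \<open>\<open>x * ln x\<close> vanishes at \<open>0\<close> whatever \<open>ln 0\<close> is, so the cut-off built into
    \<^const>\<open>mat_log\<close> disappears\<close>
  have g: "x * g x = x * ln x" if "x \<ge> 0" for x using that by (auto simp: g_def)
  have "trace (\<rho> ** mat_log \<rho>) = (\<Sum>k\<in>UNIV. complex_of_real (r k * g (r k)))"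
    using trace_mult_mat_fun[OF a, of \<rho> g] eigenbasis_eigenvalue[OF a]
    unfolding mat_log_def g_def[symmetric] by (simp add: mult.commute)
  also have "\<dots> = complex_of_real (\<Sum>k\<in>UNIV. r k * ln (r k))"
    by (simp only: g[OF r] of_real_sum)
  finally have log_\<rho>: "trace (\<rho> ** mat_log \<rho>) = complex_of_real (\<Sum>k\<in>UNIV. r k * ln (r k))" .
  have "trace (\<rho> ** mat_log \<sigma>) = (\<Sum>m\<in>UNIV. complex_of_real (s m * g (s m)))"
    using trace_mult_mat_fun[OF b, of \<rho> g] diag unfolding mat_log_def g_def[symmetric]
    by (simp add: mult.commute)
  also have "\<dots> = complex_of_real (\<Sum>m\<in>UNIV. s m * ln (s m))"
    by (simp only: g[OF s] of_real_sum)
  finally have "trace (\<rho> ** (mat_log \<rho> - mat_log \<sigma>))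
      = complex_of_real ((\<Sum>k\<in>UNIV. r k * ln (r k)) - (\<Sum>m\<in>UNIV. s m * ln (s m)))"
    by (simp only: matrix_diff_ldistrib trace_sub log_\<rho> of_real_diff)
  then show ?thesis unfolding rel_entropy_def if_P[OF supp] by (simp only: Re_complex_of_real)
qed

lemma pinch_apply: "pinch J F \<rho> *v x = (\<Sum>j\<in>J. F j *v (\<rho> *v (F j *v x)))"
  unfolding pinch_def by (simp add: matrix_sum_vector_mult matrix_vector_mul_assoc matrix_mul_assoc)

lemma hermitian_pinch: assumes "PVM J F" "hermitian \<rho>" shows "hermitian (pinch J F \<rho>)"
proof -
  have "adj (F j ** \<rho> ** F j) = F j ** \<rho> ** F j" if "j \<in> J" for j
    using PVM_projection[OF assms(1) that] assms(2) unfolding projection_def hermitian_def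
    by (simp add: adj_mult matrix_mul_assoc)
  then show ?thesis unfolding hermitian_def pinch_def adj_sum by (simp cong: sum.cong)
qed

lemma pinch_apply_range:
  assumes PV: "PVM J F" and j: "j \<in> J" and x: "F j *v x = x"
  shows "pinch J F \<rho> *v x = F j *v (\<rho> *v x)"
proof -
  have "F j' *v (\<rho> *v (F j' *v x)) = (if j' = j then F j *v (\<rho> *v x) else 0)" if "j' \<in> J" for j'
    using PVM_orthogonal_range[OF PV that j _ x] x by auto
  then show ?thesis
    unfolding pinch_apply using PV j by (simp add: PVM_def cong: sum.cong)
qed

lemma pinch_commute:
  assumes PV: "PVM J F" and j: "j \<in> J"
  shows "pinch J F \<rho> ** F j = F j ** pinch J F \<rho>"
proof (subst matrix_eq, intro allI)
  fix x
  have pj: "projection (F j)" by (rule PVM_projection[OF PV j])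
  have "F j *v (F j' *v y) = (if j' = j then F j *v y else 0)" if "j' \<in> J" for j' y
    using PVM_orthogonal_apply[OF PV j that] projection_idem_apply[OF pj] by auto
  then have "(F j ** pinch J F \<rho>) *v x = F j *v (\<rho> *v (F j *v x))"
    using PV j by (simp add: matrix_vector_mul_assoc[symmetric] pinch_apply vec.sum PVM_def cong: sum.cong)
  also have "\<dots> = (pinch J F \<rho> ** F j) *v x"
    using pinch_apply_range[OF PV j projection_idem_apply[OF pj]]
    by (simp add: matrix_vector_mul_assoc[symmetric] projection_idem_apply[OF pj])
  finally show "(pinch J F \<rho> ** F j) *v x = (F j ** pinch J F \<rho>) *v x" by simp
qed

lemma cinner_pinch_range:
  assumes PV: "PVM J F" and j: "j \<in> J" and x: "F j *v x = x"
  shows "cinner x (pinch J F \<rho> *v x) = cinner x (\<rho> *v x)"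
  using pinch_apply_range[OF PV j x] cinner_projection[OF PVM_projection[OF PV j], of x] x by simp

lemma cinner_pinch_eigenbasis:
  assumes PF: "PVM J F" and b: "eigenbasis (pinch J F \<rho>) b s" and bF: "adapted J F b"
  shows "cinner (b m) (\<rho> *v b m) = complex_of_real (s m)"
proof -
  obtain j where "j \<in> J" "F j *v b m = b m" using bF unfolding adapted_def by blast
  then show ?thesis using cinner_pinch_range[OF PF] eigenbasis_eigenvalue[OF b] by metis
qed

lemma cinner_eigenbasis_quadratic_form:
  assumes "eigenbasis \<rho> a r"
  shows "cinner x (\<rho> *v x) = complex_of_real (\<Sum>k\<in>UNIV. r k * (cmod (cinner (a k) x))\<^sup>2)"
proof -
  have a: "orthonormal_basis a" and ar: "\<And>k. \<rho> *v a k = complex_of_real (r k) *s a k"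
    using assms unfolding eigenbasis_def by auto
  have "\<rho> *v x = (\<Sum>k\<in>UNIV. (complex_of_real (r k) * cinner (a k) x) *s a k)"
    by (subst orthonormal_basis_expand[OF a, of x]) (simp add: vec.sum vec.scale ar mult.commute)
  then have "cinner x (\<rho> *v x)
      = (\<Sum>k\<in>UNIV. complex_of_real (r k) * (cinner (a k) x * cnj (cinner (a k) x)))"
    by (simp add: cinner_sum_right cinner_scale_right cinner_commute[of x "a _"] mult_ac)
  also have "\<dots> = complex_of_real (\<Sum>k\<in>UNIV. r k * (cmod (cinner (a k) x))\<^sup>2)"
    by (simp add: complex_norm_square[symmetric] of_real_sum)
  finally show ?thesis .
qed

lemma pinch_eigenvalue_mixture:
  assumes PF: "PVM J F" and a: "eigenbasis \<rho> a r"
    and b: "eigenbasis (pinch J F \<rho>) b s" "adapted J F b"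
  shows "s m = (\<Sum>k\<in>UNIV. r k * (cmod (cinner (a k) (b m)))\<^sup>2)"
proof -
  have "complex_of_real (s m) = complex_of_real (\<Sum>k\<in>UNIV. r k * (cmod (cinner (a k) (b m)))\<^sup>2)"
    unfolding cinner_pinch_eigenbasis[OF PF b, symmetric] by (rule cinner_eigenbasis_quadratic_form[OF a])
  then show ?thesis by (simp only: of_real_eq_iff)
qed

text \<open>An eigenvector \<open>a\<^sub>k\<close> with \<open>r\<^sub>k \<noteq> 0\<close> is \<open>\<sigma>\<close> applied to its expansion in the
  \<open>b\<^sub>m\<close> with coefficients divided by \<open>s\<^sub>m\<close>; the hypothesis kills the terms with \<open>s\<^sub>m = 0\<close>.\<close>
lemma range_subset_eigenbases:
  assumes a: "eigenbasis \<rho> a r" and b: "eigenbasis \<sigma> b s"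
    and ker: "\<And>k m. r k \<noteq> 0 \<Longrightarrow> s m = 0 \<Longrightarrow> cinner (b m) (a k) = 0"
  shows "range (\<lambda>x. \<rho> *v x) \<subseteq> range (\<lambda>x. \<sigma> *v x)"
proof -
  have ar: "\<And>k. \<rho> *v a k = complex_of_real (r k) *s a k"
    and bs: "\<And>m. \<sigma> *v b m = complex_of_real (s m) *s b m" and b': "orthonormal_basis b"
    using a b unfolding eigenbasis_def by auto
  define y where "y k = (\<Sum>m\<in>UNIV. (cinner (b m) (a k) / complex_of_real (s m)) *s b m)" for k
  have ry: "\<rho> *v a k = \<sigma> *v (complex_of_real (r k) *s y k)" for k
  proof (cases "r k = 0")
    case True then show ?thesis by (simp add: ar vec.scale)
  next
    case False
    have "(cinner (b m) (a k) / complex_of_real (s m)) * complex_of_real (s m) = cinner (b m) (a k)" for m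
      using ker[OF False, of m] by (cases "s m = 0") auto
    then have "\<sigma> *v y k = (\<Sum>m\<in>UNIV. cinner (b m) (a k) *s b m)"
      unfolding y_def by (simp add: vec.sum vec.scale bs)
    also have "\<dots> = a k" using orthonormal_basis_expand[OF b', of "a k"] by simp
    finally show ?thesis by (simp add: ar vec.scale)
  qed
  show ?thesis
  proof
    fix z assume "z \<in> range (\<lambda>x. \<rho> *v x)"
    then obtain x where x: "z = \<rho> *v x" by blast
    have "\<rho> *v x = \<rho> *v (\<Sum>k\<in>UNIV. cinner (a k) x *s a k)"
      using orthonormal_basis_expand[OF a[unfolded eigenbasis_def, THEN conjunct1], of x] by simp
    also have "\<dots> = \<sigma> *v (\<Sum>k\<in>UNIV. cinner (a k) x *s (complex_of_real (r k) *s y k))"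
      by (simp add: vec.sum vec.scale ry)
    finally show "z \<in> range (\<lambda>x. \<sigma> *v x)" using x by blast
  qed
qed

lemma range_subset_of_eigenvalue_mixture:
  assumes a: "eigenbasis \<rho> a r" and b: "eigenbasis \<sigma> b s" and r: "\<And>k. 0 \<le> r k"
    and mix: "\<And>m. s m = (\<Sum>k\<in>UNIV. r k * (cmod (cinner (a k) (b m)))\<^sup>2)"
  shows "range (\<lambda>x. \<rho> *v x) \<subseteq> range (\<lambda>x. \<sigma> *v x)"
  using a b
proof (rule range_subset_eigenbases)
  fix k m assume rk: "r k \<noteq> 0" and sm: "s m = 0"
  have "r k * (cmod (cinner (a k) (b m)))\<^sup>2 = 0"
    using mix[of m] sm r by (simp add: sum_nonneg_eq_0_iff)
  then show "cinner (b m) (a k) = 0" using rk cinner_commute[of "b m" "a k"] by simp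
qed

lemma PVM_le_range:
  assumes PF: "PVM J F" and le: "pvm_le I E J F" and i: "i \<in> I" and j: "j \<in> J" and x: "F j *v x = x"
  shows "E i *v x = x \<or> E i *v x = 0"
proof -
  obtain S where S: "S \<subseteq> J" "E i = (\<Sum>j\<in>S. F j)" using le i unfolding pvm_le_def by blast
  have "F j' *v x = (if j' = j then x else 0)" if "j' \<in> J" for j'
    using PVM_orthogonal_range[OF PF that j _ x] x by auto
  then have "E i *v x = (\<Sum>j'\<in>S. if j' = j then x else 0)"
    unfolding S(2) matrix_sum_vector_mult using S(1) by (intro sum.cong) auto
  moreover have "finite S" using S(1) PF unfolding PVM_def by (metis finite_subset)
  ultimately show ?thesis by simp
qed

lemma PVM_le_adapted:
  assumes PE: "PVM I E" and PF: "PVM J F" and le: "pvm_le I E J F"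
    and b: "orthonormal_basis b" and bF: "adapted J F b"
  shows "adapted I E b"
  unfolding adapted_def
proof
  fix c
  obtain j where j: "j \<in> J" "F j *v b c = b c" using bF unfolding adapted_def by blast
  show "\<exists>i\<in>I. E i *v b c = b c"
  proof (rule ccontr)
    assume "\<not> (\<exists>i\<in>I. E i *v b c = b c)"
    then have "E i *v b c = 0" if "i \<in> I" for i using PVM_le_range[OF PF le that j] that by blast
    then have "b c = 0" using PVM_sum_apply[OF PE, of "b c"] by simp
    then show False using orthonormal_basis_norm[OF b, of c] by simp
  qed
qed

lemma cinner_PVM_ranges:
  assumes PE: "PVM I E" and i: "i \<in> I" "i' \<in> I" "i \<noteq> i'" and x: "E i *v x = x" and y: "E i' *v y = y"
  shows "cinner x y = 0"
proof -
  have "cinner x y = cinner (E i' *v x) y"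
    using cinner_projection[OF PVM_projection[OF PE i(2)], of x y] y by simp
  also have "E i' *v x = 0" using PVM_orthogonal_range[OF PE i(2,1)] i(3) x by metis
  finally show ?thesis by simp
qed

lemma card_le_range_dim:
  assumes b: "orthonormal_basis b" and M: "\<And>m. m \<in> M \<Longrightarrow> A *v b m = b m"
  shows "card M \<le> range_dim A"
proof -
  have inj: "inj b"
    using b unfolding orthonormal_basis_def by (metis injI zero_neq_one)
  have "orthonormal (b ` M)"
    using b inj unfolding orthonormal_basis_def orthonormal_def by (auto simp: inj_eq)
  moreover have "b ` M \<subseteq> range (\<lambda>x. A *v x)" using M by (metis image_subsetI rangeI)
  ultimately have "card (b ` M) \<le> range_dim A"
    unfolding range_dim_def using orthonormal_independent vec.independent_card_le_dim by blast
  then show ?thesis using inj by (simp add: card_image inj_on_subset)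
qed

lemma range_dim_le_width: "finite I \<Longrightarrow> i \<in> I \<Longrightarrow> range_dim (E i) \<le> width I E"
  unfolding width_def by (intro le_cSup_finite) auto

lemma sum_mult_ln_le:
  fixes r :: "'k \<Rightarrow> real"
  assumes "finite K" and r: "\<And>k. k \<in> K \<Longrightarrow> 0 \<le> r k"
  shows "(\<Sum>k\<in>K. r k * ln (r k)) \<le> sum r K * ln (sum r K)"
proof -
  have "r k * ln (r k) \<le> r k * ln (sum r K)" if k: "k \<in> K" for k
  proof (cases "r k = 0")
    case False
    then have "0 < r k" using r[OF k] by simp
    moreover have "r k \<le> sum r K" using assms k by (intro member_le_sum) auto
    ultimately show ?thesis by (simp add: mult_left_mono)
  qed simp
  then have "(\<Sum>k\<in>K. r k * ln (r k)) \<le> (\<Sum>k\<in>K. r k * ln (sum r K))" by (rule sum_mono)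
  also have "\<dots> = sum r K * ln (sum r K)" by (simp add: sum_distrib_right)
  finally show ?thesis .
qed

text \<open>Entropy is at most the logarithm of the number of outcomes: apply \<open>ln x \<le> x - 1\<close>
  termwise to \<open>x = p / (n s\<^sub>m)\<close>, where \<open>p = \<Sum> s\<close> and \<open>n = card M\<close>.\<close>
lemma sum_mult_ln_ge:
  fixes s :: "'m \<Rightarrow> real"
  assumes M: "finite M" and s: "\<And>m. m \<in> M \<Longrightarrow> 0 \<le> s m"
  shows "sum s M * ln (sum s M) - (\<Sum>m\<in>M. s m * ln (s m)) \<le> sum s M * ln (card M)"
proof (cases "sum s M = 0")
  case True
  then show ?thesis using M s by (simp add: sum_nonneg_eq_0_iff)
next
  case False
  define p where "p = sum s M"
  let ?n = "real (card M)"
  have p: "p > 0" using False sum_nonneg[of M s] s unfolding p_def by fastforce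
  have n: "?n > 0" using False M by (auto simp: card_gt_0_iff)
  have "s m * (ln p - ln ?n - ln (s m)) \<le> p / ?n - s m" if m: "m \<in> M" for m
  proof (cases "s m = 0")
    case True then show ?thesis using p n by simp
  next
    case False
    then have sm: "s m > 0" using s[OF m] by simp
    have "ln p - ln ?n - ln (s m) = ln (p / (?n * s m))" using p n sm by (simp add: ln_div ln_mult)
    also have "\<dots> \<le> p / (?n * s m) - 1" using p n sm by (intro ln_le_minus_one) simp
    finally have "s m * (ln p - ln ?n - ln (s m)) \<le> s m * (p / (?n * s m) - 1)"
      using sm by (simp add: mult_left_mono)
    also have "\<dots> = p / ?n - s m" using sm n by (simp add: field_simps)
    finally show ?thesis .
  qed
  then have "(\<Sum>m\<in>M. s m * (ln p - ln ?n - ln (s m))) \<le> (\<Sum>m\<in>M. p / ?n - s m)" by (rule sum_mono)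
  also have "\<dots> = 0" using n by (simp add: sum_subtractf p_def)
  moreover have "(\<Sum>m\<in>M. s m * (ln p - ln ?n - ln (s m)))
      = p * ln p - p * ln ?n - (\<Sum>m\<in>M. s m * ln (s m))"
    by (simp add: right_diff_distrib sum_subtractf sum_distrib_right[symmetric] p_def)
  ultimately show ?thesis unfolding p_def by linarith
qed

lemma block_masses_eq:
  fixes r :: "'k \<Rightarrow> real" and s :: "'m \<Rightarrow> real" and T :: "'k \<Rightarrow> 'm \<Rightarrow> real"
  assumes K: "finite K" and M: "finite M"
    and s: "\<And>m. m \<in> M \<Longrightarrow> s m = (\<Sum>k\<in>K. r k * T k m)"
    and T: "\<And>k. k \<in> K \<Longrightarrow> (\<Sum>m\<in>M. T k m) = 1"
    and blocks: "\<And>k m. k \<in> K \<Longrightarrow> m \<in> M \<Longrightarrow> \<beta> k \<noteq> \<gamma> m \<Longrightarrow> T k m = 0"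
  shows "(\<Sum>m\<in>{m\<in>M. \<gamma> m = i}. s m) = (\<Sum>k\<in>{k\<in>K. \<beta> k = i}. r k)"
proof -
  have row: "(\<Sum>m\<in>{m\<in>M. \<gamma> m = i}. T k m) = (if \<beta> k = i then 1 else 0)" if k: "k \<in> K" for k
  proof (cases "\<beta> k = i")
    case True
    have "T k m = 0" if "m \<in> M - {m\<in>M. \<gamma> m = i}" for m
      using blocks[OF k] that True by auto
    then have "(\<Sum>m\<in>{m\<in>M. \<gamma> m = i}. T k m) = (\<Sum>m\<in>M. T k m)"
      using M by (intro sum.mono_neutral_left) auto
    then show ?thesis using T[OF k] True by simp
  next
    case False then show ?thesis using blocks[OF k] by (auto intro!: sum.neutral)
  qed
  have "(\<Sum>m\<in>{m\<in>M. \<gamma> m = i}. s m) = (\<Sum>m\<in>{m\<in>M. \<gamma> m = i}. \<Sum>k\<in>K. r k * T k m)"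
    using s by simp
  also have "\<dots> = (\<Sum>k\<in>K. r k * (\<Sum>m\<in>{m\<in>M. \<gamma> m = i}. T k m))"
    by (simp add: sum.swap[of _ "{m\<in>M. \<gamma> m = i}"] sum_distrib_left)
  also have "\<dots> = (\<Sum>k\<in>K. if \<beta> k = i then r k else 0)"
    using row by (intro sum.cong) auto
  also have "\<dots> = (\<Sum>k\<in>{k\<in>K. \<beta> k = i}. r k)"
    using K by (simp add: sum.inter_filter)
  finally show ?thesis .
qed

text \<open>Coarse-graining \<open>r\<close> to its block masses \<open>p\<^sub>i\<close> can only raise \<open>\<Sum> r ln r\<close>, and spreading each
  \<open>p\<^sub>i\<close> over at most \<open>w\<close> outcomes lowers \<open>\<Sum> s ln s\<close> by at most \<open>p\<^sub>i ln w\<close>.\<close>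
lemma entropy_increase_le_ln_block_size:
  fixes r :: "'k \<Rightarrow> real" and s :: "'m \<Rightarrow> real" and w :: nat
  assumes fin: "finite K" "finite M" "finite I"
    and blocks: "\<beta> ` K \<subseteq> I" "\<gamma> ` M \<subseteq> I"
    and r: "\<And>k. k \<in> K \<Longrightarrow> 0 \<le> r k" and s: "\<And>m. m \<in> M \<Longrightarrow> 0 \<le> s m"
    and total: "sum r K = 1"
    and mass: "\<And>i. i \<in> I \<Longrightarrow> (\<Sum>m\<in>{m\<in>M. \<gamma> m = i}. s m) = (\<Sum>k\<in>{k\<in>K. \<beta> k = i}. r k)"
    and size: "\<And>i. i \<in> I \<Longrightarrow> card {m\<in>M. \<gamma> m = i} \<le> w"
  shows "(\<Sum>k\<in>K. r k * ln (r k)) - (\<Sum>m\<in>M. s m * ln (s m)) \<le> ln (real w)"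
proof -
  define p where "p i = (\<Sum>k\<in>{k\<in>K. \<beta> k = i}. r k)" for i
  have "(\<Sum>k\<in>K. r k * ln (r k)) = (\<Sum>i\<in>I. \<Sum>k\<in>{k\<in>K. \<beta> k = i}. r k * ln (r k))"
    using sum.group[OF fin(1,3) blocks(1), of "\<lambda>k. r k * ln (r k)"] by simp
  also have "\<dots> \<le> (\<Sum>i\<in>I. p i * ln (p i))"
    unfolding p_def using fin(1) r by (intro sum_mono sum_mult_ln_le) auto
  finally have coarse: "(\<Sum>k\<in>K. r k * ln (r k)) \<le> (\<Sum>i\<in>I. p i * ln (p i))" .
  have spread: "p i * ln (p i) - (\<Sum>m\<in>{m\<in>M. \<gamma> m = i}. s m * ln (s m)) \<le> p i * ln (real w)"
    if i: "i \<in> I" for i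
  proof -
    let ?Mi = "{m\<in>M. \<gamma> m = i}"
    have "p i * ln (p i) - (\<Sum>m\<in>?Mi. s m * ln (s m)) \<le> p i * ln (card ?Mi)"
      using sum_mult_ln_ge[of ?Mi s] fin(2) s mass[OF i] unfolding p_def by auto
    also have "\<dots> \<le> p i * ln (real w)"
    proof (cases "p i = 0")
      case False
      then have "?Mi \<noteq> {}" using mass[OF i] unfolding p_def by force
      then have "0 < card ?Mi" using fin(2) by (simp add: card_gt_0_iff)
      moreover have "0 \<le> p i" unfolding p_def using r by (intro sum_nonneg) simp
      ultimately show ?thesis using size[OF i] by (intro mult_left_mono) simp_all
    qed simp
    finally show ?thesis .
  qed
  have "(\<Sum>i\<in>I. p i) = 1" using sum.group[OF fin(1,3) blocks(1), of r] total unfolding p_def by simp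
  moreover have "(\<Sum>m\<in>M. s m * ln (s m)) = (\<Sum>i\<in>I. \<Sum>m\<in>{m\<in>M. \<gamma> m = i}. s m * ln (s m))"
    using sum.group[OF fin(2,3) blocks(2), of "\<lambda>m. s m * ln (s m)"] by simp
  ultimately have "(\<Sum>i\<in>I. p i * ln (p i)) - (\<Sum>m\<in>M. s m * ln (s m)) \<le> (\<Sum>i\<in>I. p i * ln (real w))"
    using spread by (simp add: sum_subtractf[symmetric] sum_mono)
  also have "\<dots> = ln (real w)" using \<open>(\<Sum>i\<in>I. p i) = 1\<close> by (simp add: sum_distrib_right[symmetric])
  finally show ?thesis using coarse by simp
qed

lemma entropy_increase_adapted_eigenbases:
  assumes PE: "PVM I E" and a: "orthonormal_basis a" "adapted I E a"
    and b: "orthonormal_basis b" "adapted I E b"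
    and r: "\<And>k. 0 \<le> r k" and total: "(\<Sum>k\<in>UNIV. r k) = 1"
    and mix: "\<And>m. s m = (\<Sum>k\<in>UNIV. r k * (cmod (cinner (a k) (b m)))\<^sup>2)"
  shows "(\<Sum>k\<in>UNIV. r k * ln (r k)) - (\<Sum>m\<in>UNIV. s m * ln (s m)) \<le> ln (real (width I E))"
proof -
  have finI: "finite I" using PE unfolding PVM_def by simp
  obtain \<beta> where \<beta>: "\<And>k. \<beta> k \<in> I \<and> E (\<beta> k) *v a k = a k"
    using a(2) unfolding adapted_def by metis
  obtain \<gamma> where \<gamma>: "\<And>m. \<gamma> m \<in> I \<and> E (\<gamma> m) *v b m = b m"
    using b(2) unfolding adapted_def by metis
  have "(\<Sum>m\<in>UNIV. (cmod (cinner (a k) (b m)))\<^sup>2) = 1" for k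
    using orthonormal_basis_parseval[OF b(1), of "a k"] orthonormal_basis_norm[OF a(1)] by simp
  moreover have "cinner (a k) (b m) = 0" if "\<beta> k \<noteq> \<gamma> m" for k m
    using cinner_PVM_ranges[OF PE] \<beta> \<gamma> that by blast
  ultimately have mass: "(\<Sum>m\<in>{m\<in>UNIV. \<gamma> m = i}. s m) = (\<Sum>k\<in>{k\<in>UNIV. \<beta> k = i}. r k)" for i
    using mix by (intro block_masses_eq[where T = "\<lambda>k m. (cmod (cinner (a k) (b m)))\<^sup>2"]) auto
  have size: "card {m\<in>UNIV. \<gamma> m = i} \<le> width I E" if "i \<in> I" for i
  proof -
    have "card {m\<in>UNIV. \<gamma> m = i} \<le> range_dim (E i)"
      using \<gamma> by (intro card_le_range_dim[OF b(1)]) auto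
    also have "\<dots> \<le> width I E" by (rule range_dim_le_width[OF finI that])
    finally show ?thesis .
  qed
  have "0 \<le> s m" for m using mix r by (simp add: sum_nonneg)
  then show ?thesis using finI \<beta> \<gamma> r total mass size
    by (intro entropy_increase_le_ln_block_size[of UNIV UNIV I \<beta> \<gamma>]) auto
qed

theorem lemma10:
  fixes I :: "'i set" and J :: "'j set"
    and E :: "'i \<Rightarrow> complex^'n^'n" and F :: "'j \<Rightarrow> complex^'n^'n"
    and \<rho> :: "complex^'n^'n"
  assumes "PVM I E" and "PVM J F" and "pvm_le I E J F"
    and "density_op \<rho>" and "commutes_with \<rho> I E"
  shows "rel_entropy \<rho> (pinch J F \<rho>) \<le> ereal (ln (real (width I E)))"
proof -
  note PE = assms(1) and PF = assms(2)
  have \<rho>: "hermitian \<rho>" "psd \<rho>" "trace \<rho> = 1" using assms(4) unfolding density_op_def psd_def by auto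
  obtain a r where a: "eigenbasis \<rho> a r" "adapted I E a"
    using hermitian_commuting_eigenbasis[OF \<rho>(1) PE] assms(5) unfolding commutes_with_def by blast
  obtain b s where b: "eigenbasis (pinch J F \<rho>) b s" "adapted J F b"
    using hermitian_commuting_eigenbasis[OF hermitian_pinch[OF PF \<rho>(1)] PF pinch_commute[OF PF]] by blast
  have bE: "adapted I E b" using PVM_le_adapted[OF PE PF assms(3)] b unfolding eigenbasis_def by blast
  have r: "0 \<le> r k" for k using psd_eigenvalue_nonneg[OF \<rho>(2) a(1)] .
  have total: "(\<Sum>k\<in>UNIV. r k) = 1" using trace_eigenbasis[OF a(1)] \<rho>(3) by (simp del: of_real_sum)
  have diag: "cinner (b m) (\<rho> *v b m) = complex_of_real (s m)" for m
    using cinner_pinch_eigenbasis[OF PF b] .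
  have mix: "s m = (\<Sum>k\<in>UNIV. r k * (cmod (cinner (a k) (b m)))\<^sup>2)" for m
    using pinch_eigenvalue_mixture[OF PF a(1) b] .
  have "rel_entropy \<rho> (pinch J F \<rho>) = ereal ((\<Sum>k\<in>UNIV. r k * ln (r k)) - (\<Sum>m\<in>UNIV. s m * ln (s m)))"
    using mix r by (intro rel_entropy_eigenbases[OF a(1) b(1) r _ diag]
        range_subset_of_eigenvalue_mixture[OF a(1) b(1) r]) (simp_all add: sum_nonneg)
  also have "\<dots> \<le> ereal (ln (real (width I E)))"
    using entropy_increase_adapted_eigenbases[OF PE _ a(2) _ bE r total mix] a(1) b(1)
    unfolding eigenbasis_def by simp
  finally show ?thesis .
qed

end
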